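(* For every $A\in P(n)$, $$I(2,A)=I(sp,\bar A\circ A)^{1/2}.$$
   Context: $P(n)$ denotes positive semidefinite complex $n\times n$ matrices, $\circ$ the Hadamard (entrywise) product, $\bar A$ the entrywise complex conjugate. $I(2,A)=\min\{\|A\circ B\|_2: B\in P(n),\ \|B\|_2=1\}$ with $\|\cdot\|_2$ the Frobenius norm, and $I(sp,C)=\min\{\|C\circ B\|: B\in P(n),\ \|B\|=1\}$ with $\|\cdot\|$ the spectral norm. *)

theory Defs
  imports "HOL-Analysis.Analysis"
begin

text \<open>n x n complex matrices are rendered as complex^'n^'n, with n = CARD('n).\<close>

definition conj_transpose :: "complex^'n^'m \<Rightarrow> complex^'m^'n" where
  "conj_transpose A = (\<chi> i j. cnj (A $ j $ i))"

definition hermitian :: "complex^'n^'n \<Rightarrow> bool" where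
  "hermitian A \<longleftrightarrow> conj_transpose A = A"

definition psd :: "complex^'n^'n \<Rightarrow> bool" where
  "psd A \<longleftrightarrow> hermitian A \<and>
     (\<forall>x::complex^'n. let q = (\<Sum>i\<in>UNIV. cnj (x $ i) * (A *v x) $ i)
                      in Im q = 0 \<and> Re q \<ge> 0)"

definition hadamard :: "complex^'n^'m \<Rightarrow> complex^'n^'m \<Rightarrow> complex^'n^'m" (infixl "\<circ>\<^sub>H" 70) where
  "A \<circ>\<^sub>H B = (\<chi> i j. A $ i $ j * B $ i $ j)"

definition conj_mat :: "complex^'n^'m \<Rightarrow> complex^'n^'m" where
  "conj_mat A = (\<chi> i j. cnj (A $ i $ j))"

definition frob_norm :: "complex^'n^'m \<Rightarrow> real" where
  "frob_norm A = sqrt (\<Sum>i\<in>UNIV. \<Sum>j\<in>UNIV. (cmod (A $ i $ j))^2)"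

definition spec_norm :: "complex^'n^'m \<Rightarrow> real" where
  "spec_norm A = onorm (\<lambda>x::complex^'n. A *v x)"

definition I2 :: "complex^'n^'n \<Rightarrow> real" where
  "I2 A = Inf {frob_norm (A \<circ>\<^sub>H B) | B. psd B \<and> frob_norm B = 1}"

definition Isp :: "complex^'n^'n \<Rightarrow> real" where
  "Isp C = Inf {spec_norm (C \<circ>\<^sub>H B) | B. psd B \<and> spec_norm B = 1}"

end

theory Submission
  imports Defs
begin

text \<open>Let \<open>C = conj A \<circ> A\<close>, with entries \<open>c\<^sub>i\<^sub>j = |a\<^sub>i\<^sub>j|\<^sup>2\<close>, and let \<open>m\<close> be the minimum of
  \<open>w\<^sup>T c w\<close> over the probability simplex; both sides of the identity equal \<open>sqrt m\<close>.
  If \<open>B\<close> is psd with \<open>\<parallel>B\<parallel>\<^sub>2 = 1\<close>, the row sums \<open>r\<^sub>i = \<Sum>\<^sub>j |b\<^sub>i\<^sub>j|\<^sup>2\<close> form a probability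
  vector with \<open>r = P 1\<close> for \<open>P = conj B \<circ> B\<close>, so \<open>P - r r\<^sup>T\<close> is psd, and the Schur product
  theorem applied to \<open>C \<circ> (P - r r\<^sup>T)\<close> gives \<open>\<parallel>A \<circ> B\<parallel>\<^sub>2\<^sup>2 \<ge> r\<^sup>T c r \<ge> m\<close>.
  If \<open>B\<close> is psd with spectral norm 1, it has a unit eigenvector \<open>u\<close> for the eigenvalue 1, so
  \<open>B - u u\<^sup>*\<close> is psd and \<open>\<parallel>C \<circ> B\<parallel> \<ge> u\<^sup>*(C \<circ> u u\<^sup>*)u = w\<^sup>T c w \<ge> m\<close> with \<open>w\<^sub>i = |u\<^sub>i|\<^sup>2\<close>.
  Both bounds are attained at \<open>B = y y\<^sup>*\<close>, \<open>y\<^sub>i = sqrt w\<^sub>i\<close>, for a minimiser \<open>w\<close>: the first-order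
  condition \<open>(c w)\<^sub>k \<le> m\<close> on the support of \<open>w\<close> is exactly what the Schur test needs to bound
  \<open>\<parallel>C \<circ> y y\<^sup>*\<parallel>\<close> by \<open>m\<close>.\<close>

section \<open>Sesquilinear forms and positive semidefinite matrices\<close>

definition sesq_form :: "complex^'n^'n \<Rightarrow> complex^'n \<Rightarrow> complex^'n \<Rightarrow> complex" where
  "sesq_form M x y = (\<Sum>i\<in>UNIV. \<Sum>j\<in>UNIV. cnj (x$i) * M$i$j * y$j)"

definition cinner :: "complex^'n \<Rightarrow> complex^'n \<Rightarrow> complex" where
  "cinner x y = (\<Sum>i\<in>UNIV. cnj (x$i) * y$i)"

definition outer_prod :: "complex^'n \<Rightarrow> complex^'m \<Rightarrow> complex^'m^'n" where
  "outer_prod v w = (\<chi> i j. v$i * cnj (w$j))"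

lemma hadamard_nth [simp]: "(A \<circ>\<^sub>H B)$i$j = A$i$j * B$i$j"
  unfolding hadamard_def by simp

lemma outer_prod_nth [simp]: "outer_prod v w $i$j = v$i * cnj (w$j)"
  unfolding outer_prod_def by simp

lemma conj_mat_nth [simp]: "conj_mat A $i$j = cnj (A$i$j)"
  unfolding conj_mat_def by simp

lemma hadamard_add_right: "P \<circ>\<^sub>H (M + N) = P \<circ>\<^sub>H M + P \<circ>\<^sub>H N"
  by (simp add: vec_eq_iff algebra_simps)

lemma psd_iff_sesq_form:
  "psd M \<longleftrightarrow> hermitian M \<and> (\<forall>x. Im (sesq_form M x x) = 0 \<and> 0 \<le> Re (sesq_form M x x))"
  unfolding psd_def sesq_form_def matrix_vector_mult_def Let_def
  by (simp add: sum_distrib_left mult.assoc)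

lemma psdD:
  assumes "psd M"
  shows "hermitian M" "Im (sesq_form M x x) = 0" "0 \<le> Re (sesq_form M x x)"
  using assms by (auto simp: psd_iff_sesq_form)

lemma psdI:
  assumes "hermitian M" "\<And>x. Im (sesq_form M x x) = 0" "\<And>x. 0 \<le> Re (sesq_form M x x)"
  shows "psd M"
  using assms by (auto simp: psd_iff_sesq_form)

lemma hermitian_iff_entries: "hermitian M \<longleftrightarrow> (\<forall>i j. cnj (M$i$j) = M$j$i)"
  unfolding hermitian_def conj_transpose_def vec_eq_iff by auto

lemma hermitian_cnj_entry: "hermitian M \<Longrightarrow> cnj (M$i$j) = M$j$i"
  by (simp add: hermitian_iff_entries)

lemma sesq_form_hermitian_swap:
  assumes "hermitian M"
  shows "sesq_form M y x = cnj (sesq_form M x y)"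
proof -
  have "cnj (sesq_form M x y) = (\<Sum>i\<in>UNIV. \<Sum>j\<in>UNIV. x$i * cnj (M$i$j) * cnj (y$j))"
    unfolding sesq_form_def by (simp add: cnj_sum)
  also have "\<dots> = (\<Sum>j\<in>UNIV. \<Sum>i\<in>UNIV. x$i * cnj (M$i$j) * cnj (y$j))"
    by (rule sum.swap)
  also have "\<dots> = sesq_form M y x"
    unfolding sesq_form_def by (intro sum.cong refl) (simp add: hermitian_cnj_entry[OF assms] mult_ac)
  finally show ?thesis by simp
qed

lemma sesq_form_eq_cinner: "sesq_form M x y = cinner x (M *v y)"
  unfolding sesq_form_def cinner_def matrix_vector_mult_def
  by (simp add: sum_distrib_left mult.assoc)

lemma sesq_form_add: "sesq_form (M + N) x y = sesq_form M x y + sesq_form N x y"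
  unfolding sesq_form_def by (simp add: sum.distrib algebra_simps)

lemma sesq_form_diff: "sesq_form (M - N) x y = sesq_form M x y - sesq_form N x y"
  unfolding sesq_form_def by (simp add: sum_subtractf algebra_simps)

lemma sesq_form_outer_prod: "sesq_form (outer_prod v w) x y = cinner x v * cnj (cinner y w)"
  unfolding sesq_form_def cinner_def outer_prod_def
  by (simp add: sum_product cnj_sum mult_ac)

lemma matrix_vector_mult_axis: "M *v axis j a = (\<chi> i. M$i$j * a)"
  unfolding matrix_vector_mult_def axis_def
  by (simp add: if_distrib[where f = "\<lambda>a. _ * a"] cong: if_cong)

lemma sesq_form_axis: "sesq_form M (axis i a) (axis j b) = cnj a * M$i$j * b"
  unfolding sesq_form_eq_cinner matrix_vector_mult_axis
  by (simp add: cinner_def axis_def if_distrib[where f = "\<lambda>a. cnj a * _"] cong: if_cong)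

lemma norm_vec_power2: "(norm x)^2 = (\<Sum>i\<in>UNIV. (norm (x$i))^2)"
  by (simp add: norm_vec_def L2_set_def sum_nonneg)

lemma cinner_self: "cinner x x = of_real ((norm x)^2)"
  unfolding norm_vec_power2 cinner_def of_real_sum
  by (intro sum.cong refl) (metis complex_norm_square mult.commute of_real_power)

lemma norm_cinner_le: "cmod (cinner x y) \<le> norm x * norm y"
proof -
  have "cmod (cinner x y) \<le> (\<Sum>i\<in>UNIV. \<bar>cmod (x$i)\<bar> * \<bar>cmod (y$i)\<bar>)"
    unfolding cinner_def by (rule order_trans[OF norm_sum]) (simp add: norm_mult)
  also have "\<dots> \<le> norm x * norm y"
    unfolding norm_vec_def by (rule L2_set_mult_ineq)
  finally show ?thesis .
qed

lemma quadratic_nonneg_imp_discrim_le: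
  fixes a b c :: real
  assumes "0 \<le> c" and nonneg: "\<And>t. 0 \<le> a + 2 * t * b + t^2 * c"
  shows "b^2 \<le> a * c"
proof (cases "c = 0")
  case True
  have "b = 0"
  proof (rule ccontr)
    assume "b \<noteq> 0"
    have "0 \<le> a + 2 * (- (a + 1) / (2 * b)) * b"
      using nonneg[of "- (a + 1) / (2 * b)"] True by simp
    also have "\<dots> = -1" using \<open>b \<noteq> 0\<close> by (simp add: field_simps)
    finally show False by simp
  qed
  then show ?thesis using True by simp
next
  case False
  then have "0 < c" using assms(1) by simp
  have "0 \<le> a + 2 * (- b / c) * b + (- b / c)^2 * c" by (rule nonneg)
  also have "\<dots> = (a * c - b^2) / c" using \<open>0 < c\<close> by (simp add: field_simps power2_eq_square)
  finally show ?thesis using \<open>0 < c\<close> by (simp add: zero_le_divide_iff)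
qed

lemma sesq_form_add_scaled_self:
  "sesq_form M (x + s *s y) (x + s *s y)
     = sesq_form M x x + s * sesq_form M x y + cnj s * sesq_form M y x + cnj s * s * sesq_form M y y"
  unfolding sesq_form_def by (simp add: sum.distrib sum_distrib_left algebra_simps)

lemma psd_cauchy_schwarz:
  assumes "psd M"
  shows "(cmod (sesq_form M x y))^2 \<le> Re (sesq_form M x x) * Re (sesq_form M y y)"
proof (cases "sesq_form M x y = 0")
  case True
  then show ?thesis using psdD(3)[OF assms] by simp
next
  case False
  define b where "b = sesq_form M x y"
  have "0 \<le> Re (sesq_form M x x) + 2 * t * cmod b + t^2 * Re (sesq_form M y y)" for t
  proof -
    define s where "s = complex_of_real t * cnj b / of_real (cmod b)"
    have b0: "cmod b \<noteq> 0" using False b_def by simp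
    have bb: "cnj b * b = of_real (cmod b * cmod b)"
      using complex_norm_square[of b] by (simp add: power2_eq_square mult.commute)
    have sb: "s * b = of_real (t * cmod b)"
      using b0 unfolding s_def by (simp add: mult.assoc bb)
    have "cnj s * s = of_real (t^2) * (cnj b * b) / of_real (cmod b * cmod b)"
      unfolding s_def by (simp add: power2_eq_square mult_ac)
    then have ss: "cnj s * s = of_real (t^2)"
      using b0 unfolding bb by simp
    have "0 \<le> Re (sesq_form M (x + s *s y) (x + s *s y))" using psdD(3)[OF assms] .
    also have "\<dots> = Re (sesq_form M x x) + 2 * t * cmod b + t^2 * Re (sesq_form M y y)"
      unfolding sesq_form_add_scaled_self sesq_form_hermitian_swap[OF psdD(1)[OF assms], of y x]
      using sb ss psdD(2)[OF assms, of y] by (simp add: b_def flip: complex_cnj_mult)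
    finally show ?thesis .
  qed
  then show ?thesis
    unfolding b_def by (intro quadratic_nonneg_imp_discrim_le psdD[OF assms]) simp
qed

lemma psd_zero [simp]: "psd 0"
  by (rule psdI) (simp_all add: hermitian_iff_entries sesq_form_def)

lemma psd_add: "psd M \<Longrightarrow> psd N \<Longrightarrow> psd (M + N)"
  by (rule psdI) (simp_all add: hermitian_iff_entries sesq_form_add psdD psdD(1)[THEN hermitian_cnj_entry])

lemma psd_outer_prod: "psd (outer_prod v v)"
proof (rule psdI)
  show "hermitian (outer_prod v v)" by (simp add: hermitian_iff_entries mult.commute)
  have "sesq_form (outer_prod v v) x x = of_real ((cmod (cinner x v))^2)" for x
    unfolding sesq_form_outer_prod by (simp add: complex_norm_square del: of_real_power)
  then show "Im (sesq_form (outer_prod v v) x x) = 0" "0 \<le> Re (sesq_form (outer_prod v v) x x)" for x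
    by simp_all
qed

lemma psd_diff_outer_prod:
  assumes P: "psd P" and z: "sesq_form P z z = 1"
  shows "psd (P - outer_prod (P *v z) (P *v z))"
proof (rule psdI)
  show "hermitian (P - outer_prod (P *v z) (P *v z))"
    using psdD(1)[OF P] by (simp add: hermitian_iff_entries hermitian_cnj_entry mult.commute)
  fix x
  have "sesq_form (P - outer_prod (P *v z) (P *v z)) x x
          = sesq_form P x x - of_real ((cmod (sesq_form P x z))^2)"
    unfolding sesq_form_diff sesq_form_outer_prod by (simp add: sesq_form_eq_cinner complex_norm_square del: of_real_power)
  moreover have "(cmod (sesq_form P x z))^2 \<le> Re (sesq_form P x x)"
    using psd_cauchy_schwarz[OF P, of x z] z by simp
  ultimately show "Im (sesq_form (P - outer_prod (P *v z) (P *v z)) x x) = 0"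
    "0 \<le> Re (sesq_form (P - outer_prod (P *v z) (P *v z)) x x)"
    using psdD(2)[OF P, of x] by simp_all
qed

lemma psd_zero_diag:
  assumes Q: "psd Q" and "Q$k$k = 0"
  shows "Q$k$j = 0" "Q$j$k = 0"
proof -
  show "Q$k$j = 0"
    using psd_cauchy_schwarz[OF Q, of "axis k 1" "axis j 1"] \<open>Q$k$k = 0\<close>
    by (simp add: sesq_form_axis)
  then show "Q$j$k = 0"
    using hermitian_cnj_entry[OF psdD(1)[OF Q], of k j] by simp
qed

lemma psd_conj_mat: "psd A \<Longrightarrow> psd (conj_mat A)"
proof (rule psdI)
  assume A: "psd A"
  then show "hermitian (conj_mat A)"
    by (simp add: hermitian_iff_entries psdD(1)[THEN hermitian_cnj_entry])
  fix x
  have "sesq_form (conj_mat A) x x = cnj (sesq_form A (\<chi> i. cnj (x$i)) (\<chi> i. cnj (x$i)))"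
    unfolding sesq_form_def by (simp add: cnj_sum)
  then show "Im (sesq_form (conj_mat A) x x) = 0" "0 \<le> Re (sesq_form (conj_mat A) x x)"
    using psdD(2,3)[OF A] by simp_all
qed

section \<open>Schur product theorem\<close>

lemma psd_hadamard_outer_prod:
  assumes P: "psd P"
  shows "psd (P \<circ>\<^sub>H outer_prod v v)"
proof (rule psdI)
  show "hermitian (P \<circ>\<^sub>H outer_prod v v)"
    using psdD(1)[OF P] by (simp add: hermitian_iff_entries hermitian_cnj_entry mult_ac)
  fix x
  have "sesq_form (P \<circ>\<^sub>H outer_prod v v) x x
          = sesq_form P (\<chi> j. cnj (v$j) * x$j) (\<chi> j. cnj (v$j) * x$j)"
    unfolding sesq_form_def by (simp add: mult_ac)
  then show "Im (sesq_form (P \<circ>\<^sub>H outer_prod v v) x x) = 0"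
    "0 \<le> Re (sesq_form (P \<circ>\<^sub>H outer_prod v v) x x)"
    using psdD(2,3)[OF P] by simp_all
qed

lemma psd_diag_real_nonneg:
  assumes "psd Q"
  shows "Q$k$k = of_real (Re (Q$k$k))" "0 \<le> Re (Q$k$k)"
  using psdD(2,3)[OF assms, of "axis k 1"] by (simp_all add: sesq_form_axis complex_eq_iff)

lemma psd_eliminate_pivot:
  assumes Q: "psd Q" and pivot: "Q$k$k \<noteq> 0"
  obtains v where "psd (Q - outer_prod v v)"
    and "\<And>i j. (Q - outer_prod v v)$i$j = Q$i$j - Q$i$k * Q$k$j / Q$k$k"
proof -
  define r where "r = Re (Q$k$k)"
  have Qkk: "Q$k$k = of_real r" and "0 < r"
    using psd_diag_real_nonneg[OF Q, of k] pivot unfolding r_def by (auto simp: less_le)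
  define c where "c = complex_of_real (1 / sqrt r)"
  have cc: "cnj c * c = 1 / Q$k$k"
    using \<open>0 < r\<close> unfolding c_def Qkk by (simp flip: of_real_mult)
  define v where "v = Q *v axis k c"
  have "sesq_form Q (axis k c) (axis k c) = cnj c * c * Q$k$k"
    by (simp add: sesq_form_axis mult_ac)
  then have "sesq_form Q (axis k c) (axis k c) = 1"
    using cc pivot by simp
  then have "psd (Q - outer_prod v v)"
    unfolding v_def by (rule psd_diff_outer_prod[OF Q])
  moreover have "(Q - outer_prod v v)$i$j = Q$i$j - (cnj c * c) * (Q$i$k * Q$k$j)" for i j
    using hermitian_cnj_entry[OF psdD(1)[OF Q], of j k]
    by (simp add: v_def matrix_vector_mult_axis mult_ac)
  ultimately show thesis using cc by (intro that) simp_all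
qed

text \<open>Induction on the support of \<open>Q\<close>, peeling off one rank-one piece per nonzero pivot.\<close>
theorem psd_hadamard:
  assumes P: "psd P" and Q: "psd Q"
  shows "psd (P \<circ>\<^sub>H Q)"
proof -
  have "psd (P \<circ>\<^sub>H Q)" if "finite I" "psd Q" "\<forall>i j. Q$i$j \<noteq> 0 \<longrightarrow> i \<in> I \<and> j \<in> I" for I Q
    using that
  proof (induction I arbitrary: Q rule: finite_induct)
    case empty
    then have "P \<circ>\<^sub>H Q = 0" by (simp add: vec_eq_iff)
    then show ?case by simp
  next
    case (insert k I Q)
    show ?case
    proof (cases "Q$k$k = 0")
      case True
      then have "\<forall>i j. Q$i$j \<noteq> 0 \<longrightarrow> i \<in> I \<and> j \<in> I"
        using insert.prems psd_zero_diag[OF insert.prems(1) True] by blast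
      then show ?thesis using insert.IH insert.prems(1) by blast
    next
      case False
      obtain v where Q': "psd (Q - outer_prod v v)"
        and entries: "\<And>i j. (Q - outer_prod v v)$i$j = Q$i$j - Q$i$k * Q$k$j / Q$k$k"
        using psd_eliminate_pivot[OF insert.prems(1) False] by blast
      have "i \<in> I \<and> j \<in> I" if "(Q - outer_prod v v)$i$j \<noteq> 0" for i j
      proof -
        have "i \<noteq> k" "j \<noteq> k" using that False unfolding entries by auto
        moreover have "Q$i$j \<noteq> 0 \<or> Q$i$k \<noteq> 0 \<and> Q$k$j \<noteq> 0"
          using that unfolding entries by auto
        ultimately show ?thesis using insert.prems(2) by blast
      qed
      then have "psd (P \<circ>\<^sub>H (Q - outer_prod v v))" using insert.IH Q' by blast
      moreover have "P \<circ>\<^sub>H Q = P \<circ>\<^sub>H (Q - outer_prod v v) + P \<circ>\<^sub>H outer_prod v v"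
        unfolding hadamard_add_right[symmetric] by simp
      ultimately show ?thesis using psd_add psd_hadamard_outer_prod[OF P] by metis
    qed
  qed
  from this[of UNIV] show ?thesis using Q by simp
qed

section \<open>Spectral norm\<close>

lemma Re_cinner: "Re (cinner x y) = inner x y"
  unfolding cinner_def inner_vec_def inner_complex_def by (simp add: Re_sum)

lemma spec_norm_nonneg: "0 \<le> spec_norm M"
  unfolding spec_norm_def by (rule onorm_pos_le[OF matrix_vector_mul_bounded_linear])

lemma norm_matrix_vector_mult_le: "norm (M *v x) \<le> spec_norm M * norm x"
  unfolding spec_norm_def by (rule onorm[OF matrix_vector_mul_bounded_linear])

lemma spec_norm_leI: "(\<And>x. norm (M *v x) \<le> b * norm x) \<Longrightarrow> spec_norm M \<le> b"
  unfolding spec_norm_def by (rule onorm_le)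

lemma cmod_sesq_form_le_spec_norm:
  "norm u = 1 \<Longrightarrow> cmod (sesq_form M u u) \<le> spec_norm M"
  using norm_cinner_le[of u "M *v u"] norm_matrix_vector_mult_le[of M u]
  by (simp add: sesq_form_eq_cinner)

lemma spec_norm_attained:
  fixes M :: "complex^'n^'m"
  obtains u where "norm u = 1" "norm (M *v u) = spec_norm M"
proof -
  have "sphere (0::complex^'n) 1 \<noteq> {}" by simp
  then obtain u :: "complex^'n" where u: "norm u = 1"
    and max: "\<And>y. norm y = 1 \<Longrightarrow> norm (M *v y) \<le> norm (M *v u)"
    using continuous_attains_sup[OF compact_sphere, of 0 1 "\<lambda>x. norm (M *v x)"]
    by (force intro!: continuous_intros)
  have "norm (M *v x) \<le> norm (M *v u) * norm x" for x
  proof (cases "x = 0")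
    case False
    have "M *v x = norm x *\<^sub>R (M *v (x /\<^sub>R norm x))"
      using False by (simp add: linear.scaleR[OF matrix_vector_mul_linear])
    then show ?thesis
      using max[of "x /\<^sub>R norm x"] False by (simp add: mult.commute mult_left_mono)
  qed simp
  then have "spec_norm M \<le> norm (M *v u)" by (rule spec_norm_leI)
  moreover have "norm (M *v u) \<le> spec_norm M" using norm_matrix_vector_mult_le[of M u] u by simp
  ultimately show thesis using u that by simp
qed

text \<open>If \<open>u\<close> is a unit vector with \<open>|B u| = s = |B|\<close>, Cauchy--Schwarz for the form of \<open>B\<close>
  applied to \<open>B u\<close> and \<open>u\<close> gives \<open>s \<le> u\<^sup>* B u\<close>, and then \<open>|B u - s u|\<^sup>2 \<le> 0\<close>.\<close>
lemma psd_spec_norm_eigenvector: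
  assumes B: "psd B"
  obtains u where "norm u = 1" "B *v u = spec_norm B *\<^sub>R u"
proof -
  define s where "s = spec_norm B"
  obtain u where u: "norm u = 1" and Bu: "norm (B *v u) = s"
    using spec_norm_attained[of B] unfolding s_def by blast
  define z where "z = B *v u"
  have "0 \<le> s" unfolding s_def by (rule spec_norm_nonneg)
  have Rayleigh: "s \<le> Re (sesq_form B u u)"
  proof (cases "s = 0")
    case False
    have "Re (sesq_form B z z) \<le> norm z * norm (B *v z)"
      using complex_Re_le_cmod[of "sesq_form B z z"] norm_cinner_le[of z "B *v z"]
      by (simp add: sesq_form_eq_cinner)
    also have "\<dots> \<le> s * (s * s)"
      using norm_matrix_vector_mult_le[of B z] Bu \<open>0 \<le> s\<close> unfolding z_def s_def
      by (intro mult_mono) auto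
    finally have zz: "Re (sesq_form B z z) \<le> s^3" by (simp add: power3_eq_cube)
    have "cmod (sesq_form B z u) = s^2"
      using Bu by (simp add: sesq_form_eq_cinner cinner_self z_def norm_power)
    then have "s^4 \<le> Re (sesq_form B z z) * Re (sesq_form B u u)"
      using psd_cauchy_schwarz[OF B, of z u] by (simp flip: power_mult)
    also have "\<dots> \<le> s^3 * Re (sesq_form B u u)"
      using zz psdD(3)[OF B] by (rule mult_right_mono)
    finally show ?thesis using False \<open>0 \<le> s\<close> by (simp add: power_eq_if)
  qed (simp add: psdD(3)[OF B])
  have "(norm (z - s *\<^sub>R u))^2 = (norm z)^2 - 2 * s * (u \<bullet> z) + s^2 * (norm u)^2"
    unfolding power2_norm_eq_inner
    by (simp add: inner_diff_left inner_diff_right inner_commute algebra_simps power2_eq_square)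
  also have "\<dots> = s^2 - 2 * s * Re (sesq_form B u u) + s^2"
    using Bu u by (simp add: sesq_form_eq_cinner Re_cinner z_def)
  also have "\<dots> \<le> 0"
    using mult_left_mono[OF Rayleigh \<open>0 \<le> s\<close>] by (simp add: power2_eq_square)
  finally have "z = s *\<^sub>R u" by simp
  then show thesis using that u unfolding z_def s_def by blast
qed

lemma weighted_cauchy_schwarz:
  fixes a p y :: "'a \<Rightarrow> real"
  assumes "\<And>j. 0 \<le> a j" "\<And>j. 0 \<le> p j" "\<And>j. p j = 0 \<Longrightarrow> a j = 0"
  shows "(\<Sum>j\<in>J. a j * y j)^2 \<le> (\<Sum>j\<in>J. a j * p j) * (\<Sum>j\<in>J. a j * (y j)^2 / p j)"
proof -
  have factor: "a j * y j = sqrt (a j * p j) * (sqrt (a j / p j) * y j)" for j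
    using assms[of j] by (cases "p j = 0") (simp_all add: real_sqrt_mult [symmetric])
  have "(\<Sum>j\<in>J. a j * y j)^2 = (\<Sum>j\<in>J. sqrt (a j * p j) * (sqrt (a j / p j) * y j))^2"
    by (simp only: factor)
  also have "\<dots> \<le> (\<Sum>j\<in>J. (sqrt (a j * p j))^2) * (\<Sum>j\<in>J. (sqrt (a j / p j) * y j)^2)"
    by (rule Cauchy_Schwarz_ineq_sum)
  also have "\<dots> = (\<Sum>j\<in>J. a j * p j) * (\<Sum>j\<in>J. a j * (y j)^2 / p j)"
    using assms by (simp add: power_mult_distrib)
  finally show ?thesis .
qed

lemma spec_norm_le_schur_test:
  fixes M :: "complex^'n^'n" and p :: "'n \<Rightarrow> real"
  assumes "0 \<le> m" and p_nonneg: "\<And>j. 0 \<le> p j" and p_zero: "\<And>i j. p j = 0 \<Longrightarrow> M$i$j = 0"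
    and rows: "\<And>i. (\<Sum>j\<in>UNIV. cmod (M$i$j) * p j) \<le> m * p i"
    and cols: "\<And>j. (\<Sum>i\<in>UNIV. cmod (M$i$j) * p i) \<le> m * p j"
  shows "spec_norm M \<le> m"
proof (rule spec_norm_leI)
  fix x :: "complex^'n"
  define T where "T i = (\<Sum>j\<in>UNIV. cmod (M$i$j) * (cmod (x$j))^2 / p j)" for i
  have "(cmod ((M *v x)$i))^2 \<le> m * p i * T i" for i
  proof -
    have "cmod ((M *v x)$i) \<le> (\<Sum>j\<in>UNIV. cmod (M$i$j) * cmod (x$j))"
      unfolding matrix_vector_mult_def by (simp add: order_trans[OF norm_sum] norm_mult)
    then have "(cmod ((M *v x)$i))^2 \<le> (\<Sum>j\<in>UNIV. cmod (M$i$j) * cmod (x$j))^2"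
      by (simp add: power_mono)
    also have "\<dots> \<le> (\<Sum>j\<in>UNIV. cmod (M$i$j) * p j) * T i"
      unfolding T_def using p_nonneg p_zero by (intro weighted_cauchy_schwarz) auto
    also have "\<dots> \<le> m * p i * T i"
      using rows by (rule mult_right_mono) (simp add: T_def sum_nonneg p_nonneg)
    finally show ?thesis .
  qed
  then have "(norm (M *v x))^2 \<le> (\<Sum>i\<in>UNIV. m * p i * T i)"
    unfolding norm_vec_power2 by (rule sum_mono)
  also have "\<dots> = m * (\<Sum>j\<in>UNIV. (\<Sum>i\<in>UNIV. cmod (M$i$j) * p i) * ((cmod (x$j))^2 / p j))"
    unfolding T_def sum_distrib_left sum_distrib_right by (subst sum.swap) (simp add: mult_ac)
  also have "\<dots> \<le> m * (\<Sum>j\<in>UNIV. m * (cmod (x$j))^2)"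
  proof (intro mult_left_mono sum_mono \<open>0 \<le> m\<close>)
    fix j
    have "(\<Sum>i\<in>UNIV. cmod (M$i$j) * p i) * ((cmod (x$j))^2 / p j) \<le> m * p j * ((cmod (x$j))^2 / p j)"
      using cols p_nonneg by (intro mult_right_mono) auto
    also have "\<dots> \<le> m * (cmod (x$j))^2"
      using p_nonneg[of j] \<open>0 \<le> m\<close> by (cases "p j = 0") auto
    finally show "(\<Sum>i\<in>UNIV. cmod (M$i$j) * p i) * ((cmod (x$j))^2 / p j) \<le> m * (cmod (x$j))^2" .
  qed
  also have "\<dots> = (m * norm x)^2"
    unfolding power_mult_distrib norm_vec_power2 by (simp add: sum_distrib_left power2_eq_square mult.assoc)
  finally show "norm (M *v x) \<le> m * norm x"
    by (rule power2_le_imp_le) (simp add: \<open>0 \<le> m\<close>)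
qed

section \<open>Quadratic forms on the probability simplex\<close>

definition prob_simplex :: "(real^'n) set" where
  "prob_simplex = {w. (\<forall>i. 0 \<le> w$i) \<and> (\<Sum>i\<in>UNIV. w$i) = 1}"

lemma axis_in_prob_simplex: "axis k 1 \<in> prob_simplex"
  by (simp add: prob_simplex_def axis_def)

lemma compact_prob_simplex: "compact prob_simplex"
proof -
  have "prob_simplex \<subseteq> cbox 0 (1 :: real^'n)"
  proof
    fix w :: "real^'n" assume w: "w \<in> prob_simplex"
    have "w$i \<le> 1" for i
      using member_le_sum[of i UNIV "\<lambda>j. w$j"] w by (simp add: prob_simplex_def)
    then show "w \<in> cbox 0 1" using w by (simp add: prob_simplex_def mem_box_cart)
  qed
  moreover have "closed (prob_simplex :: (real^'n) set)"
    unfolding prob_simplex_def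
    by (intro closed_Collect_conj closed_Collect_all closed_Collect_le closed_Collect_eq continuous_intros)
  ultimately show ?thesis
    using compact_Int_closed[OF compact_cbox] by (metis inf.absorb_iff2)
qed

lemma symmetric_quadratic_form_add_scaled:
  fixes C :: "real^'n^'n"
  assumes "transpose C = C"
  shows "(w + t *\<^sub>R d) \<bullet> (C *v (w + t *\<^sub>R d))
           = w \<bullet> (C *v w) + 2 * t * (d \<bullet> (C *v w)) + t^2 * (d \<bullet> (C *v d))"
proof -
  have "w \<bullet> (C *v d) = d \<bullet> (C *v w)"
    using dot_lmul_matrix[of w C d] vector_transpose_matrix[of w C] assms
    by (simp add: inner_commute)
  then show ?thesis
    by (simp add: matrix_vector_right_distrib matrix_vector_mult_scaleR inner_add_left
        inner_add_right algebra_simps power2_eq_square)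
qed

lemma prob_simplex_shift_mass:
  assumes w: "w \<in> prob_simplex" and "0 \<le> t" "t \<le> w$k"
  shows "w + t *\<^sub>R (w - axis k 1) \<in> prob_simplex"
proof -
  have "0 \<le> (w + t *\<^sub>R (w - axis k 1))$i" for i
  proof (cases "i = k")
    case True
    have "0 \<le> t * w$k" using assms by (simp add: prob_simplex_def)
    then show ?thesis using True \<open>t \<le> w$k\<close> by (simp add: algebra_simps)
  next
    case False
    then show ?thesis using assms by (simp add: prob_simplex_def axis_def)
  qed
  moreover have "(\<Sum>i\<in>UNIV. (w + t *\<^sub>R (w - axis k 1))$i) = 1"
    using w by (simp add: prob_simplex_def sum.distrib sum_subtractf flip: sum_distrib_left)
      (simp add: axis_def)
  ultimately show ?thesis by (simp add: prob_simplex_def)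
qed

lemma nonneg_if_affine_nonneg_near_zero:
  fixes a b \<epsilon> :: real
  assumes "0 < \<epsilon>" and "\<And>t. 0 < t \<Longrightarrow> t \<le> \<epsilon> \<Longrightarrow> 0 \<le> a + t * b"
  shows "0 \<le> a"
proof (rule tendsto_lowerbound)
  show "((\<lambda>t. a + t * b) \<longlongrightarrow> a) (at_right 0)" by (auto intro!: tendsto_eq_intros)
  show "eventually (\<lambda>t. 0 \<le> a + t * b) (at_right 0)"
    using assms by (auto simp: eventually_at_right_field intro!: exI[of _ \<epsilon>])
qed simp

lemma prob_simplex_minimizer_gradient_le:
  fixes C :: "real^'n^'n"
  assumes sym: "transpose C = C" and w0: "w0 \<in> prob_simplex"
    and min: "\<And>w. w \<in> prob_simplex \<Longrightarrow> w0 \<bullet> (C *v w0) \<le> w \<bullet> (C *v w)"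
    and pos: "0 < w0$k"
  shows "(C *v w0)$k \<le> w0 \<bullet> (C *v w0)"
proof -
  define d where "d = w0 - axis k 1"
  define q where "q = w0 \<bullet> (C *v w0)"
  have dCw0: "d \<bullet> (C *v w0) = q - (C *v w0)$k"
    unfolding d_def q_def by (simp add: inner_diff_left inner_axis')
  have "0 \<le> 2 * (q - (C *v w0)$k) + t * (d \<bullet> (C *v d))" if "0 < t" "t \<le> w0$k" for t
  proof -
    have "q \<le> (w0 + t *\<^sub>R d) \<bullet> (C *v (w0 + t *\<^sub>R d))"
      unfolding q_def d_def using prob_simplex_shift_mass[OF w0] that by (intro min) simp
    also have "\<dots> = q + t * (2 * (q - (C *v w0)$k) + t * (d \<bullet> (C *v d)))"
      unfolding symmetric_quadratic_form_add_scaled[OF sym] dCw0 q_def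
      by (simp add: algebra_simps power2_eq_square)
    finally show ?thesis using \<open>0 < t\<close> by (simp add: zero_le_mult_iff)
  qed
  then have "0 \<le> 2 * (q - (C *v w0)$k)"
    using pos by (rule nonneg_if_affine_nonneg_near_zero[rotated])
  then show ?thesis unfolding q_def by simp
qed

section \<open>Hadamard products with entrywise squared moduli\<close>

definition cmod_sq_mat :: "complex^'n^'m \<Rightarrow> real^'n^'m" where
  "cmod_sq_mat A = (\<chi> i j. (cmod (A$i$j))^2)"

definition cmod_sq_vec :: "complex^'n \<Rightarrow> real^'n" where
  "cmod_sq_vec y = (\<chi> i. (cmod (y$i))^2)"

definition cmod_sq_form :: "complex^'n^'n \<Rightarrow> real^'n \<Rightarrow> real" where
  "cmod_sq_form A w = w \<bullet> (cmod_sq_mat A *v w)"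

lemma cmod_sq_form_nonneg: "(\<And>i. 0 \<le> w$i) \<Longrightarrow> 0 \<le> cmod_sq_form A w"
  by (auto simp: cmod_sq_form_def inner_vec_def matrix_vector_mult_def cmod_sq_mat_def
      intro!: sum_nonneg mult_nonneg_nonneg)

lemma conj_mat_hadamard_self: "conj_mat A \<circ>\<^sub>H A = (\<chi> i j. of_real (cmod_sq_mat A $i$j))"
  by (simp add: vec_eq_iff cmod_sq_mat_def complex_norm_square mult.commute del: of_real_power)

lemma psd_conj_mat_hadamard_self: "psd A \<Longrightarrow> psd (conj_mat A \<circ>\<^sub>H A)"
  by (intro psd_hadamard psd_conj_mat)

lemma transpose_cmod_sq_mat:
  assumes "hermitian A"
  shows "transpose (cmod_sq_mat A) = cmod_sq_mat A"
proof -
  have "cmod (A$j$i) = cmod (A$i$j)" for i j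
    using hermitian_cnj_entry[OF assms, of i j] by (metis complex_mod_cnj)
  then show ?thesis by (simp add: transpose_def cmod_sq_mat_def vec_eq_iff)
qed

lemma norm_eq_1_iff_cmod_sq_vec_in_prob_simplex: "norm y = 1 \<longleftrightarrow> cmod_sq_vec y \<in> prob_simplex"
  by (simp add: prob_simplex_def cmod_sq_vec_def norm_eq_1 power2_norm_eq_inner[symmetric]
      norm_vec_power2)

lemma frob_norm_power2: "(frob_norm M)^2 = (\<Sum>i\<in>UNIV. \<Sum>j\<in>UNIV. (cmod (M$i$j))^2)"
  unfolding frob_norm_def by (simp add: sum_nonneg)

lemma frob_norm_nonneg: "0 \<le> frob_norm M"
  by (simp add: frob_norm_def sum_nonneg)

lemma frob_norm_outer_prod: "frob_norm (outer_prod v w) = norm v * norm w"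
proof -
  have "(frob_norm (outer_prod v w))^2 = (norm v * norm w)^2"
    by (simp add: frob_norm_power2 norm_vec_power2 norm_mult power_mult_distrib sum_product)
  then show ?thesis by (simp add: power2_eq_iff_nonneg frob_norm_nonneg)
qed

lemma norm_vector_smult: "norm (c *s x) = cmod c * norm (x :: complex^'n)"
proof -
  have "(norm (c *s x))^2 = (cmod c * norm x)^2"
    by (simp add: norm_vec_power2 norm_mult power_mult_distrib sum_distrib_left)
  then show ?thesis by (simp add: power2_eq_iff_nonneg)
qed

lemma spec_norm_outer_prod_self: "spec_norm (outer_prod y y) = (norm y)^2"
proof -
  have mv: "outer_prod y y *v x = cinner y x *s y" for x
    by (simp add: vec_eq_iff matrix_vector_mult_def cinner_def sum_distrib_left mult_ac)
  have "spec_norm (outer_prod y y) \<le> (norm y)^2"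
  proof (rule spec_norm_leI)
    show "norm (outer_prod y y *v x) \<le> (norm y)^2 * norm x" for x
      using mult_right_mono[OF norm_cinner_le[of y x], of "norm y"]
      by (simp add: mv norm_vector_smult power2_eq_square mult_ac)
  qed
  moreover have "(norm y)^2 * norm y \<le> spec_norm (outer_prod y y) * norm y"
    using norm_matrix_vector_mult_le[of "outer_prod y y" y]
    by (simp add: mv norm_vector_smult cinner_self power2_eq_square norm_mult)
  ultimately show ?thesis
    using spec_norm_nonneg[of "outer_prod y y"] by (cases "y = 0") simp_all
qed

lemma cnj_mult_self: "cnj z * z = of_real ((cmod z)^2)"
  by (simp add: complex_norm_square mult.commute del: of_real_power)

lemma frob_norm_hadamard_outer_prod_self:
  "(frob_norm (A \<circ>\<^sub>H outer_prod y y))^2 = cmod_sq_form A (cmod_sq_vec y)"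
  by (simp add: frob_norm_power2 cmod_sq_form_def cmod_sq_vec_def cmod_sq_mat_def inner_vec_def
      matrix_vector_mult_def norm_mult power_mult_distrib sum_distrib_left mult_ac)

lemma sesq_form_hadamard_outer_prod_self:
  "sesq_form (conj_mat A \<circ>\<^sub>H A \<circ>\<^sub>H outer_prod y y) y y
     = of_real (cmod_sq_form A (cmod_sq_vec y))"
proof -
  have "cnj (y$i) * ((conj_mat A \<circ>\<^sub>H A)$i$j * (y$i * cnj (y$j))) * y$j
          = of_real ((cmod_sq_vec y)$i * (cmod_sq_mat A $i$j * (cmod_sq_vec y)$j))" for i j
  proof -
    have "cnj (y$i) * ((conj_mat A \<circ>\<^sub>H A)$i$j * (y$i * cnj (y$j))) * y$j
            = (cnj (y$i) * y$i) * ((conj_mat A \<circ>\<^sub>H A)$i$j * (cnj (y$j) * y$j))"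
      by (simp only: mult_ac)
    then show ?thesis
      by (simp only: cnj_mult_self conj_mat_hadamard_self cmod_sq_vec_def vec_lambda_beta of_real_mult)
  qed
  then show ?thesis
    by (simp add: sesq_form_def cmod_sq_form_def inner_vec_def matrix_vector_mult_def sum_distrib_left)
qed

lemma frob_norm_hadamard_lower:
  assumes A: "psd A" and B: "psd B" and B1: "frob_norm B = 1"
  obtains w where "w \<in> prob_simplex" "cmod_sq_form A w \<le> (frob_norm (A \<circ>\<^sub>H B))^2"
proof -
  define P where "P = conj_mat B \<circ>\<^sub>H B"
  define r where "r = cmod_sq_mat B *v 1"
  have sumB: "(\<Sum>i\<in>UNIV. \<Sum>j\<in>UNIV. cmod_sq_mat B $i$j) = 1"
    using B1 frob_norm_power2[of B] by (simp add: cmod_sq_mat_def)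
  have Pe: "P *v 1 = (\<chi> i. of_real (r$i))"
    unfolding P_def r_def conj_mat_hadamard_self by (simp add: vec_eq_iff matrix_vector_mult_def)
  have "sesq_form P 1 1 = 1"
    using sumB unfolding P_def conj_mat_hadamard_self by (simp add: sesq_form_def flip: of_real_sum)
  then have "psd (conj_mat A \<circ>\<^sub>H A \<circ>\<^sub>H (P - outer_prod (P *v 1) (P *v 1)))"
    using B unfolding P_def
    by (intro psd_hadamard psd_conj_mat_hadamard_self psd_diff_outer_prod A)
  then have "0 \<le> Re (sesq_form (conj_mat A \<circ>\<^sub>H A \<circ>\<^sub>H (P - outer_prod (P *v 1) (P *v 1))) 1 1)"
    by (rule psdD)
  also have "\<dots> = (frob_norm (A \<circ>\<^sub>H B))^2 - cmod_sq_form A r"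
    unfolding Pe unfolding P_def conj_mat_hadamard_self
    by (simp add: sesq_form_def frob_norm_power2 cmod_sq_form_def cmod_sq_mat_def
        inner_vec_def matrix_vector_mult_def norm_mult power_mult_distrib algebra_simps
        sum_distrib_left sum_subtractf)
  finally have "cmod_sq_form A r \<le> (frob_norm (A \<circ>\<^sub>H B))^2" by simp
  moreover have "r \<in> prob_simplex"
    using sumB by (simp add: prob_simplex_def r_def matrix_vector_mult_def cmod_sq_mat_def sum_nonneg)
  ultimately show thesis by (rule that[rotated])
qed

lemma spec_norm_hadamard_lower:
  assumes A: "psd A" and B: "psd B" and B1: "spec_norm B = 1"
  obtains w where "w \<in> prob_simplex" "cmod_sq_form A w \<le> spec_norm (conj_mat A \<circ>\<^sub>H A \<circ>\<^sub>H B)"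
proof -
  define C where "C = conj_mat A \<circ>\<^sub>H A"
  obtain u where u: "norm u = 1" and Bu: "B *v u = u"
    using psd_spec_norm_eigenvector[OF B] B1 by auto
  then have "sesq_form B u u = 1" by (simp add: sesq_form_eq_cinner cinner_self)
  then have "psd (B - outer_prod u u)"
    using psd_diff_outer_prod[OF B] Bu by metis
  then have "psd (C \<circ>\<^sub>H (B - outer_prod u u))"
    unfolding C_def by (rule psd_hadamard[OF psd_conj_mat_hadamard_self[OF A]])
  moreover have "C \<circ>\<^sub>H B = C \<circ>\<^sub>H (B - outer_prod u u) + C \<circ>\<^sub>H outer_prod u u"
    unfolding hadamard_add_right[symmetric] by simp
  ultimately have "cmod_sq_form A (cmod_sq_vec u) \<le> Re (sesq_form (C \<circ>\<^sub>H B) u u)"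
    unfolding C_def by (simp add: sesq_form_add sesq_form_hadamard_outer_prod_self psdD)
  also have "\<dots> \<le> spec_norm (C \<circ>\<^sub>H B)"
    using complex_Re_le_cmod cmod_sesq_form_le_spec_norm[OF u] by (rule order_trans)
  finally show thesis
    using u that unfolding C_def norm_eq_1_iff_cmod_sq_vec_in_prob_simplex by blast
qed

lemma spec_norm_hadamard_outer_prod_le:
  assumes A: "hermitian A" and "0 \<le> m"
    and grad: "\<And>k. y$k \<noteq> 0 \<Longrightarrow> (cmod_sq_mat A *v cmod_sq_vec y)$k \<le> m"
  shows "spec_norm (conj_mat A \<circ>\<^sub>H A \<circ>\<^sub>H outer_prod y y) \<le> m"
proof -
  define c where "c = cmod_sq_mat A"
  define M where "M = conj_mat A \<circ>\<^sub>H A \<circ>\<^sub>H outer_prod y y"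
  have entries: "cmod (M$i$j) = c$i$j * cmod (y$i) * cmod (y$j)" for i j
    by (simp add: M_def c_def cmod_sq_mat_def norm_mult power2_eq_square)
  have rows: "(\<Sum>j\<in>UNIV. cmod (M$i$j) * cmod (y$j)) \<le> m * cmod (y$i)" for i
  proof -
    have "(\<Sum>j\<in>UNIV. cmod (M$i$j) * cmod (y$j)) = cmod (y$i) * (c *v cmod_sq_vec y)$i"
      unfolding entries
      by (simp add: matrix_vector_mult_def cmod_sq_vec_def sum_distrib_left power2_eq_square mult_ac)
    also have "\<dots> \<le> m * cmod (y$i)"
      using grad[of i] unfolding c_def by (cases "y$i = 0") (simp_all add: mult.commute)
    finally show ?thesis .
  qed
  have "c$i$j = c$j$i" for i j
    using transpose_cmod_sq_mat[OF A] unfolding c_def transpose_def vec_eq_iff by simp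
  then have "cmod (M$i$j) = cmod (M$j$i)" for i j
    unfolding entries by (simp only: mult_ac)
  then have cols: "(\<Sum>i\<in>UNIV. cmod (M$i$j) * cmod (y$i)) \<le> m * cmod (y$j)" for j
    using rows[of j] by simp
  show ?thesis
    unfolding M_def[symmetric]
    by (rule spec_norm_le_schur_test[where p = "\<lambda>i. cmod (y$i)", OF \<open>0 \<le> m\<close> _ _ rows cols])
      (simp_all add: M_def)
qed

section \<open>The two infima\<close>

lemma sqrt_weights_outer_prod:
  assumes "w \<in> prob_simplex"
  defines "y \<equiv> \<chi> i. complex_of_real (sqrt (w$i))"
  shows "cmod_sq_vec y = w" "psd (outer_prod y y)"
    "frob_norm (outer_prod y y) = 1" "spec_norm (outer_prod y y) = 1"
proof -
  show y: "cmod_sq_vec y = w"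
    using assms by (simp add: y_def cmod_sq_vec_def prob_simplex_def vec_eq_iff)
  then have "norm y = 1"
    using assms norm_eq_1_iff_cmod_sq_vec_in_prob_simplex by metis
  then show "psd (outer_prod y y)" "frob_norm (outer_prod y y) = 1" "spec_norm (outer_prod y y) = 1"
    by (simp_all add: psd_outer_prod frob_norm_outer_prod spec_norm_outer_prod_self)
qed

lemma spec_norm_hadamard_sqrt_weights_le_min:
  assumes A: "psd A" and w0: "w0 \<in> prob_simplex"
    and min: "\<And>w. w \<in> prob_simplex \<Longrightarrow> cmod_sq_form A w0 \<le> cmod_sq_form A w"
  defines "y \<equiv> \<chi> i. complex_of_real (sqrt (w0$i))"
  shows "spec_norm (conj_mat A \<circ>\<^sub>H A \<circ>\<^sub>H outer_prod y y) \<le> cmod_sq_form A w0"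
proof (rule spec_norm_hadamard_outer_prod_le[OF psdD(1)[OF A]])
  show "0 \<le> cmod_sq_form A w0"
    using w0 by (intro cmod_sq_form_nonneg) (simp add: prob_simplex_def)
  show "(cmod_sq_mat A *v cmod_sq_vec y)$k \<le> cmod_sq_form A w0" if "y$k \<noteq> 0" for k
  proof -
    have "0 < w0$k" using that w0 by (simp add: y_def prob_simplex_def less_le)
    moreover have "\<And>w. w \<in> prob_simplex \<Longrightarrow> w0 \<bullet> (cmod_sq_mat A *v w0) \<le> w \<bullet> (cmod_sq_mat A *v w)"
      using min unfolding cmod_sq_form_def .
    ultimately show ?thesis
      using prob_simplex_minimizer_gradient_le[OF transpose_cmod_sq_mat[OF psdD(1)[OF A]] w0]
      unfolding y_def sqrt_weights_outer_prod(1)[OF w0] cmod_sq_form_def by simp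
  qed
qed

lemma I2_eq_sqrt_min_cmod_sq_form:
  assumes A: "psd A" and w0: "w0 \<in> prob_simplex"
    and min: "\<And>w. w \<in> prob_simplex \<Longrightarrow> cmod_sq_form A w0 \<le> cmod_sq_form A w"
  shows "I2 A = sqrt (cmod_sq_form A w0)"
  unfolding I2_def
proof (rule cInf_eq_minimum)
  define y where "y = (\<chi> i. complex_of_real (sqrt (w0$i)))"
  note y = sqrt_weights_outer_prod[OF w0, folded y_def]
  have "frob_norm (A \<circ>\<^sub>H outer_prod y y) = sqrt (cmod_sq_form A w0)"
    using frob_norm_hadamard_outer_prod_self[of A y] y(1) frob_norm_nonneg
    by (metis real_sqrt_unique)
  then show "sqrt (cmod_sq_form A w0) \<in> {frob_norm (A \<circ>\<^sub>H B) |B. psd B \<and> frob_norm B = 1}"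
    using y(2,3) by (intro CollectI exI[of _ "outer_prod y y"]) simp
next
  fix x assume "x \<in> {frob_norm (A \<circ>\<^sub>H B) |B. psd B \<and> frob_norm B = 1}"
  then obtain B where B: "psd B" "frob_norm B = 1" and x: "x = frob_norm (A \<circ>\<^sub>H B)" by blast
  obtain w where "w \<in> prob_simplex" "cmod_sq_form A w \<le> x^2"
    using frob_norm_hadamard_lower[OF A B] unfolding x .
  then have "cmod_sq_form A w0 \<le> x^2" using min order_trans by blast
  then show "sqrt (cmod_sq_form A w0) \<le> x"
    unfolding x by (rule real_le_lsqrt[OF frob_norm_nonneg])
qed

lemma Isp_eq_min_cmod_sq_form:
  assumes A: "psd A" and w0: "w0 \<in> prob_simplex"
    and min: "\<And>w. w \<in> prob_simplex \<Longrightarrow> cmod_sq_form A w0 \<le> cmod_sq_form A w"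
  shows "Isp (conj_mat A \<circ>\<^sub>H A) = cmod_sq_form A w0"
  unfolding Isp_def
proof (rule cInf_eq_minimum)
  have lower: "cmod_sq_form A w0 \<le> spec_norm (conj_mat A \<circ>\<^sub>H A \<circ>\<^sub>H B)"
    if B: "psd B" "spec_norm B = 1" for B
  proof -
    obtain w where "w \<in> prob_simplex" "cmod_sq_form A w \<le> spec_norm (conj_mat A \<circ>\<^sub>H A \<circ>\<^sub>H B)"
      using spec_norm_hadamard_lower[OF A B] .
    then show ?thesis using min order_trans by blast
  qed
  then show "cmod_sq_form A w0 \<le> x"
    if "x \<in> {spec_norm (conj_mat A \<circ>\<^sub>H A \<circ>\<^sub>H B) |B. psd B \<and> spec_norm B = 1}" for x
    using that by blast
  define y where "y = (\<chi> i. complex_of_real (sqrt (w0$i)))"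
  note y = sqrt_weights_outer_prod[OF w0, folded y_def]
  have "spec_norm (conj_mat A \<circ>\<^sub>H A \<circ>\<^sub>H outer_prod y y) = cmod_sq_form A w0"
    using spec_norm_hadamard_sqrt_weights_le_min[OF A w0 min, folded y_def] lower[OF y(2,4)]
    by (rule antisym)
  then show "cmod_sq_form A w0 \<in> {spec_norm (conj_mat A \<circ>\<^sub>H A \<circ>\<^sub>H B) |B. psd B \<and> spec_norm B = 1}"
    using y(2,4) by (intro CollectI exI[of _ "outer_prod y y"]) simp
qed

theorem theorem3p3:
  fixes A :: "complex^'n^'n"
  assumes "psd A"
  shows "I2 A = sqrt (Isp (conj_mat A \<circ>\<^sub>H A))"
proof -
  have "continuous_on prob_simplex (cmod_sq_form A)"
    unfolding cmod_sq_form_def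
    by (intro continuous_intros linear_continuous_on matrix_vector_mul_bounded_linear)
  moreover have "prob_simplex \<noteq> {}" using axis_in_prob_simplex by blast
  ultimately obtain w0 where w0: "w0 \<in> prob_simplex"
    and min: "\<forall>w\<in>prob_simplex. cmod_sq_form A w0 \<le> cmod_sq_form A w"
    using continuous_attains_inf[OF compact_prob_simplex] by blast
  show ?thesis
    using I2_eq_sqrt_min_cmod_sq_form[OF assms w0] Isp_eq_min_cmod_sq_form[OF assms w0] min
    by simp
qed

end
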